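(* Let $q$ be a prime power and $m,n$ positive integers, and set $$\Upsilon(m,n;q)=\frac{\phi(q^{mn}-1)}{mn}\, q^{m(m-1)(n-1)}\prod_{i=1}^{m-1}(q^m-q^i),$$ where $\phi$ is Euler's totient function. Then the number of primitive $\sigma$-LFSRs of order $n$ over $\mathbb{F}_{q^m}$ equals $\Upsilon(m,n;q)$ if and only if $$\left|\left\{T\in \mathrm{BCM}(m,n;q)\cap \mathrm{GL}_{mn}(\mathbb{F}_q) : o(T)=q^{mn}-1\right\}\right| = \Upsilon(m,n;q),$$ where $o(T)$ denotes the order of $T$ in the group $\mathrm{GL}_{mn}(\mathbb{F}_q)$.
   Context: Fix an $\mathbb{F}_q$-basis $\{\alpha_0,\dots,\alpha_{m-1}\}$ of $\mathbb{F}_{q^m}$ and, for $s\in\mathbb{F}_{q^m}$, let $\mathbf{s}\in\mathbb{F}_q^m$ (a row vector) be its coordinate vector. A $\sigma$-LFSR of order $n$ over $\mathbb{F}_{q^m}$ is given by an $n$-tuple $(C_0,\dots,C_{n-1})$ of $m\times m$ matrices over $\mathbb{F}_q$; given an initial state $(s_0,\dots,s_{n-1})\in\mathbb{F}_{q^m}^n$ it generates the sequence $(s_0,s_1,\dots)$ in $\mathbb{F}_{q^m}$ defined by $\mathbf{s}_{i+n}=\mathbf{s}_iC_0+\mathbf{s}_{i+1}C_1+\cdots+\mathbf{s}_{i+n-1}C_{n-1}$ for $i\ge 0$. A sequence $(s_j)$ is periodic with period $r$ if $r$ is the least positive integer with $s_{j+r}=s_j$ for all $j\ge 0$. The $\sigma$-LFSR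 is primitive if for every nonzero initial state the generated sequence is periodic with period $q^{mn}-1$. Two $\sigma$-LFSRs are counted as distinct when their coefficient tuples $(C_0,\dots,C_{n-1})$ differ. An $(m,n)$-block companion matrix over $\mathbb{F}_q$ is an $mn\times mn$ matrix, written in $n\times n$ blocks of size $m\times m$, whose last block column is $(C_0,C_1,\dots,C_{n-1})^{T}$ for some $C_0,\dots,C_{n-1}\in M_m(\mathbb{F}_q)$, whose block in position $(i+1,i)$ is the identity $I_m$ for $i=1,\dots,n-1$, and all of whose other blocks are zero; $\mathrm{BCM}(m,n;q)$ denotes the set of all such matrices. *)

theory Defs
  imports "Jordan_Normal_Form.Matrix" "HOL-Number_Theory.Totient"
begin

definition coeff_tuples :: "nat \<Rightarrow> nat \<Rightarrow> ('a::field) mat list set" where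
  "coeff_tuples m n = {C. length C = n \<and> set C \<subseteq> carrier_mat m m}"

text \<open>One step of the register: window (w_0,...,w_{n-1}) of row vectors in F_q^m
  is shifted and the new entry is w_0 C_0 + ... + w_{n-1} C_{n-1}.\<close>
definition lfsr_step :: "nat \<Rightarrow> nat \<Rightarrow> ('a::field) mat list \<Rightarrow> (nat \<Rightarrow> 'a vec) \<Rightarrow> (nat \<Rightarrow> 'a vec)" where
  "lfsr_step m n C w = (\<lambda>i. if i + 1 < n then w (i + 1)
      else vec m (\<lambda>k. \<Sum>j<n. \<Sum>l<m. (w j $ l) * ((C ! j) $$ (l, k))))"

text \<open>The generated sequence (in coordinates w.r.t. the fixed basis): s_k.\<close>
definition lfsr_seq :: "nat \<Rightarrow> nat \<Rightarrow> ('a::field) mat list \<Rightarrow> (nat \<Rightarrow> 'a vec) \<Rightarrow> nat \<Rightarrow> 'a vec" where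
  "lfsr_seq m n C s0 k = ((lfsr_step m n C ^^ k) s0) 0"

definition periodic_with_period :: "(nat \<Rightarrow> 'b) \<Rightarrow> nat \<Rightarrow> bool" where
  "periodic_with_period s r \<longleftrightarrow> 0 < r \<and> (\<forall>j. s (j + r) = s j) \<and>
     (\<forall>r'. 0 < r' \<and> r' < r \<longrightarrow> \<not> (\<forall>j. s (j + r') = s j))"

definition primitive_lfsr :: "nat \<Rightarrow> nat \<Rightarrow> ('a::{finite,field}) mat list \<Rightarrow> bool" where
  "primitive_lfsr m n C \<longleftrightarrow>
     (\<forall>s0. (\<forall>i<n. s0 i \<in> carrier_vec m) \<and> (\<exists>i<n. s0 i \<noteq> 0\<^sub>v m) \<longrightarrow>
        periodic_with_period (lfsr_seq m n C s0) (card (UNIV :: 'a set) ^ (m * n) - 1))"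

definition block_companion :: "nat \<Rightarrow> nat \<Rightarrow> ('a::field) mat list \<Rightarrow> 'a mat" where
  "block_companion m n C = mat (m * n) (m * n) (\<lambda>(r, c).
      if c div m = n - 1 then (C ! (r div m)) $$ (r mod m, c mod m)
      else if r div m = c div m + 1 \<and> r mod m = c mod m then 1 else 0)"

definition BCM :: "nat \<Rightarrow> nat \<Rightarrow> ('a::field) itself \<Rightarrow> 'a mat set" where
  "BCM m n ty = block_companion m n ` coeff_tuples m n"

definition mat_order :: "('a::field) mat \<Rightarrow> nat" where
  "mat_order T = (LEAST k. 0 < k \<and> T ^\<^sub>m k = 1\<^sub>m (dim_row T))"

definition Upsilon :: "nat \<Rightarrow> nat \<Rightarrow> nat \<Rightarrow> real" where
  "Upsilon m n q = real (totient (q ^ (m * n) - 1)) / real (m * n)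
     * real q ^ (m * (m - 1) * (n - 1)) * (\<Prod>i = 1..m - 1. real q ^ m - real q ^ i)"

end

(*
  Flattening the window (w_0, ..., w_{n-1}) of a sigma-LFSR to a row vector of F_q^{mn} turns one
  step of the register into right multiplication by the block companion matrix T of
  (C_0, ..., C_{n-1}), and C |-> T is injective. Hence both sets in the theorem have the same size
  (the value of Upsilon plays no role) once we know: every nonzero vector has period exactly
  M = q^{mn} - 1 under x |-> xT iff T has order M in GL_{mn}(F_q).

  Only "if" needs an argument. Suppose T has order M = |V| - 1 on V = F_q^{mn}, but some x != 0 has
  a smaller least period r. The kernel of T^r - 1 contains 0 and the r points of the orbit of x,
  so |V| >= (r + 1) |U| for the T-invariant image U, and U != 0 as r < M. By induction on size,
  every nonzero invariant subgroup, in particular U, has a period e <= |U| - 1. If T^e fixes U, then T^{re} fixes the image of T^{re} - 1,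
  so T^{re} is unipotent and T^{req} = 1; as q is coprime to M, gcd(re, M) is a period of V. But
  gcd(re, M) <= re < (r + 1)(e + 1) - 1 <= M, contradicting the order of T.
*)

theory Submission
  imports Defs "HOL-Library.Function_Algebras" "HOL-Number_Theory.Residues"
begin

section \<open>Periods of additive maps of finite order\<close>

lemma additive_funpow:
  fixes f :: "'a::ab_group_add \<Rightarrow> 'a"
  assumes "additive f"
  shows "additive (f ^^ k)"
proof (rule additive.intro)
  show "(f ^^ k) (x + y) = (f ^^ k) x + (f ^^ k) y" for x y
    by (induction k) (simp_all add: additive.add[OF assms])
qed

lemma additive_of_nat_mult:
  fixes g :: "'a::ring_1 \<Rightarrow> 'b::ring_1"
  assumes "additive g"
  shows "g (of_nat k * x) = of_nat k * g x"
  by (induction k) (simp_all add: additive.add[OF assms] additive.zero[OF assms] distrib_right)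

lemma funpow_unipotent:
  fixes g :: "'a::ring_1 \<Rightarrow> 'a"
  assumes "additive g" and fixed: "g (g v - v) = g v - v"
  shows "(g ^^ k) v = v + of_nat k * (g v - v)"
proof (induction k)
  case (Suc k)
  have "(g ^^ Suc k) v = g v + of_nat k * g (g v - v)"
    using Suc by (simp add: additive.add[OF assms(1)] additive_of_nat_mult[OF assms(1)])
  then show ?case
    by (simp add: fixed algebra_simps)
qed simp

lemma funpow_gcd_eq:
  "(f ^^ a) x = x \<Longrightarrow> (f ^^ b) x = x \<Longrightarrow> (f ^^ gcd a b) x = x"
proof (induction a b rule: gcd_nat_induct)
  case (step a b)
  then show ?case
    using funpow_mod_eq[where f = f and n = b and m = a] by (simp add: gcd_non_0_nat)
qed simp

lemma card_eq_card_kernel_mult_card_image: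
  fixes g :: "'a::ab_group_add \<Rightarrow> 'b::ab_group_add"
  assumes "finite S" and "additive g" and subgroup: "\<And>x y. x \<in> S \<Longrightarrow> y \<in> S \<Longrightarrow> x - y \<in> S"
  shows "card S = card {v \<in> S. g v = 0} * card (g ` S)"
proof -
  have fibre: "card {v \<in> S. g v = u} = card {v \<in> S. g v = 0}" if u: "u \<in> g ` S" for u
  proof -
    obtain v0 where v0: "v0 \<in> S" "g v0 = u"
      using u by blast
    have "bij_betw (\<lambda>v. v - v0) {v \<in> S. g v = u} {v \<in> S. g v = 0}"
    proof (rule bij_betw_byWitness[where f' = "\<lambda>w. w + v0"])
      have "w + v0 \<in> S" if "w \<in> S" for w
        using subgroup[OF that subgroup[OF subgroup[OF v0(1) v0(1)] v0(1)]] by simp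
      then show "(\<lambda>w. w + v0) ` {v \<in> S. g v = 0} \<subseteq> {v \<in> S. g v = u}"
        using v0 subgroup by (auto simp: additive.add[OF assms(2)])
    qed (use v0 subgroup in \<open>auto simp: additive.diff[OF assms(2)]\<close>)
    then show ?thesis
      by (rule bij_betw_same_card)
  qed
  have "card S = (\<Sum>u \<in> g ` S. card {v \<in> S. g v = u})"
    using sum_fun_comp[of S "g ` S" g "\<lambda>_. 1 :: nat"] assms(1) by (simp add: eq_commute)
  also have "\<dots> = card {v \<in> S. g v = 0} * card (g ` S)"
    using fibre by simp
  finally show ?thesis .
qed

lemma least_period_exists:
  assumes "0 < M" and "(f ^^ M) x = x"
  obtains r where "0 < r" "(f ^^ r) x = x" "\<And>k. 0 < k \<Longrightarrow> k < r \<Longrightarrow> (f ^^ k) x \<noteq> x"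
  using exists_least_iff[of "\<lambda>r. 0 < r \<and> (f ^^ r) x = x"] assms by blast

definition periodic_on :: "('v \<Rightarrow> 'v) \<Rightarrow> 'v set \<Rightarrow> nat \<Rightarrow> bool" where
  "periodic_on f S k \<longleftrightarrow> (\<forall>x \<in> S. (f ^^ k) x = x)"

lemma periodic_on_mult: "periodic_on f S a \<Longrightarrow> periodic_on f S (a * c)"
  using funpow_mod_eq[where f = f and n = a and m = "a * c"] by (simp add: periodic_on_def)

lemma periodic_on_gcd: "periodic_on f S a \<Longrightarrow> periodic_on f S b \<Longrightarrow> periodic_on f S (gcd a b)"
  by (simp add: periodic_on_def funpow_gcd_eq)

locale periodic_additive_map =
  fixes V :: "'v::comm_ring_1 set" and f :: "'v \<Rightarrow> 'v" and q M :: nat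
  assumes finite_V: "finite V"
    and zero_in_V: "0 \<in> V"
    and diff_in_V: "\<And>x y. x \<in> V \<Longrightarrow> y \<in> V \<Longrightarrow> x - y \<in> V"
    and maps_V: "\<And>x. x \<in> V \<Longrightarrow> f x \<in> V"
    and additive: "additive f"
    and periodic: "periodic_on f V M"
    and M_pos: "0 < M"
    and char_q: "\<And>x. x \<in> V \<Longrightarrow> of_nat q * x = 0"
    and coprime_q_M: "coprime q M"
begin

definition invariant_subgroup :: "'v set \<Rightarrow> bool" where
  "invariant_subgroup S \<longleftrightarrow> S \<subseteq> V \<and> 0 \<in> S \<and> (\<forall>x \<in> S. \<forall>y \<in> S. x - y \<in> S) \<and> f ` S \<subseteq> S"

definition pow_minus_id :: "nat \<Rightarrow> 'v \<Rightarrow> 'v" where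
  "pow_minus_id r v = (f ^^ r) v - v"

lemma invariant_subgroup_V: "invariant_subgroup V"
  using zero_in_V diff_in_V maps_V by (auto simp: invariant_subgroup_def)

lemma finite_invariant_subgroup: "invariant_subgroup S \<Longrightarrow> finite S"
  using finite_V by (auto simp: invariant_subgroup_def intro: finite_subset)

lemma additive_pow_minus_id: "additive (pow_minus_id r)"
  using additive_funpow[OF additive, of r]
  by (simp add: pow_minus_id_def additive_def algebra_simps)

lemma funpow_in_invariant_subgroup:
  "invariant_subgroup S \<Longrightarrow> x \<in> S \<Longrightarrow> (f ^^ k) x \<in> S"
  by (induction k) (auto simp: invariant_subgroup_def)

lemma funpow_inj_on_V:
  assumes "x \<in> V" "y \<in> V" "(f ^^ k) x = (f ^^ k) y"
  shows "x = y"
proof -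
  have cancel: "(f ^^ (M * k - k)) ((f ^^ k) z) = z" if "z \<in> V" for z
  proof -
    have "M * k = (M * k - k) + k"
      using M_pos by simp
    then have "(f ^^ (M * k - k)) ((f ^^ k) z) = (f ^^ (M * k)) z"
      by (metis funpow_add comp_apply)
    also have "\<dots> = z"
      using periodic_on_mult[OF periodic, of k] that by (simp add: periodic_on_def)
    finally show ?thesis .
  qed
  show ?thesis
    using cancel[OF assms(1)] cancel[OF assms(2)] assms(3) by metis
qed

lemma card_eq_card_fixed_mult_card_pow_minus_id:
  assumes "invariant_subgroup S"
  shows "card S = card {v \<in> S. (f ^^ r) v = v} * card (pow_minus_id r ` S)"
  using card_eq_card_kernel_mult_card_image[OF finite_invariant_subgroup[OF assms] additive_pow_minus_id]
    assms by (simp add: invariant_subgroup_def pow_minus_id_def)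

lemma add_in_invariant_subgroup:
  assumes "invariant_subgroup S" "x \<in> S" "y \<in> S"
  shows "x + y \<in> S"
proof -
  have "0 - y \<in> S"
    using assms unfolding invariant_subgroup_def by blast
  then have "x - (0 - y) \<in> S"
    using assms unfolding invariant_subgroup_def by blast
  then show ?thesis
    by simp
qed

lemma card_fixed_points_ge_least_period:
  assumes S: "invariant_subgroup S" and x: "x \<in> S" "x \<noteq> 0"
    and fixed: "(f ^^ r) x = x" and least: "\<And>k. 0 < k \<Longrightarrow> k < r \<Longrightarrow> (f ^^ k) x \<noteq> x"
  shows "r + 1 \<le> card {v \<in> S. (f ^^ r) v = v}"
proof -
  let ?orbit = "(\<lambda>i. (f ^^ i) x) ` {..<r}"
  have xV: "x \<in> V"
    using S x by (auto simp: invariant_subgroup_def)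
  have zero: "(f ^^ i) 0 = 0" for i
    using additive.zero[OF additive_funpow[OF additive]] .
  have "inj_on (\<lambda>i. (f ^^ i) x) {..<r}"
  proof (rule linorder_inj_onI')
    fix i j assume "i \<in> {..<r}" "j \<in> {..<r}" "i < j"
    then have "(f ^^ (j - i)) x \<noteq> x"
      using least by simp
    then have "(f ^^ i) ((f ^^ (j - i)) x) \<noteq> (f ^^ i) x"
      using funpow_inj_on_V[OF funpow_in_invariant_subgroup[OF invariant_subgroup_V xV] xV] by blast
    then show "(f ^^ i) x \<noteq> (f ^^ j) x"
      using \<open>i < j\<close> by (metis funpow_add comp_apply le_add_diff_inverse less_imp_le)
  qed
  moreover have "0 \<notin> ?orbit"
    using funpow_inj_on_V[OF xV zero_in_V] x(2) zero by auto
  ultimately have "card (insert 0 ?orbit) = r + 1"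
    by (simp add: card_image)
  moreover have "(f ^^ r) ((f ^^ i) x) = (f ^^ i) x" for i
    by (metis fixed add.commute funpow_add comp_apply)
  then have "insert 0 ?orbit \<subseteq> {v \<in> S. (f ^^ r) v = v}"
    using S funpow_in_invariant_subgroup[OF S x(1)] zero by (auto simp: invariant_subgroup_def)
  moreover have "finite {v \<in> S. (f ^^ r) v = v}"
    using finite_invariant_subgroup[OF S] by simp
  ultimately show ?thesis
    using card_mono by metis
qed

lemma invariant_subgroup_pow_minus_id_image:
  assumes S: "invariant_subgroup S"
  shows "invariant_subgroup (pow_minus_id r ` S)"
proof -
  have into_S: "pow_minus_id r v \<in> S" if "v \<in> S" for v
    using S that funpow_in_invariant_subgroup[OF S that] by (simp add: invariant_subgroup_def pow_minus_id_def)
  have "f (pow_minus_id r v) = pow_minus_id r (f v)" for v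
    using additive.diff[OF additive] by (simp add: pow_minus_id_def funpow_swap1)
  then have "f ` pow_minus_id r ` S \<subseteq> pow_minus_id r ` S"
    using S by (auto simp: invariant_subgroup_def)
  moreover have "pow_minus_id r ` S \<subseteq> V" "0 \<in> pow_minus_id r ` S"
    using S into_S additive.zero[OF additive_pow_minus_id, of r]
    by (auto simp: invariant_subgroup_def image_iff intro: bexI[of _ 0])
  moreover have "a - b \<in> pow_minus_id r ` S" if "a \<in> pow_minus_id r ` S" "b \<in> pow_minus_id r ` S" for a b
    using that S additive.diff[OF additive_pow_minus_id, of r, symmetric]
    by (auto simp: invariant_subgroup_def)
  ultimately show ?thesis
    by (simp add: invariant_subgroup_def)
qed

lemma periodic_on_of_trivial_pow_minus_id_image:
  assumes "pow_minus_id r ` S = {0}"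
  shows "periodic_on f S r"
  unfolding periodic_on_def
proof
  fix v assume "v \<in> S"
  then have "pow_minus_id r v = 0"
    using assms by blast
  then show "(f ^^ r) v = v"
    by (simp add: pow_minus_id_def)
qed

text \<open>By telescoping, the image of \<open>f\<^sup>r\<^sup>e - 1\<close> lies in that of \<open>f\<^sup>r - 1\<close>, where
  \<open>f\<^sup>r\<^sup>e\<close> is the identity; so \<open>f\<^sup>r\<^sup>e\<close> is unipotent on \<open>S\<close> and \<open>f\<^sup>r\<^sup>e\<^sup>q\<close> is the identity there.\<close>

lemma periodic_on_gcd_of_image_period:
  assumes S: "invariant_subgroup S" and U: "periodic_on f (pow_minus_id r ` S) e"
  shows "periodic_on f S (gcd (r * e) M)"
proof -
  let ?U = "pow_minus_id r ` S"
  have telescope: "pow_minus_id (r * k) v \<in> ?U" if v: "v \<in> S" for v k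
  proof (induction k)
    case 0
    show ?case
      using S additive.zero[OF additive_pow_minus_id, of r]
      by (auto simp: invariant_subgroup_def pow_minus_id_def image_iff intro: bexI[of _ 0])
  next
    case (Suc k)
    have "pow_minus_id (r * Suc k) v = pow_minus_id r ((f ^^ (r * k)) v) + pow_minus_id (r * k) v"
      by (simp add: pow_minus_id_def funpow_add)
    moreover have "pow_minus_id r ((f ^^ (r * k)) v) \<in> ?U"
      using funpow_in_invariant_subgroup[OF S v] by blast
    ultimately show ?case
      using add_in_invariant_subgroup[OF invariant_subgroup_pow_minus_id_image[OF S]] Suc by simp
  qed
  have "periodic_on f S (r * e * q)"
    unfolding periodic_on_def
  proof
    fix v assume v: "v \<in> S"
    let ?h = "pow_minus_id (r * e) v"
    have h: "?h \<in> ?U"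
      using telescope[OF v] .
    moreover have "periodic_on f ?U (r * e)"
      using periodic_on_mult[OF U, of r] by (simp add: mult.commute)
    ultimately have "(f ^^ (r * e)) ?h = ?h"
      unfolding periodic_on_def by blast
    then have "((f ^^ (r * e)) ^^ q) v = v + of_nat q * ?h"
      using funpow_unipotent[OF additive_funpow[OF additive]] by (simp add: pow_minus_id_def)
    moreover have "?h \<in> V"
      using h invariant_subgroup_pow_minus_id_image[OF S, of r] unfolding invariant_subgroup_def by blast
    ultimately show "(f ^^ (r * e * q)) v = v"
      using char_q by (simp add: funpow_mult)
  qed
  moreover have "periodic_on f S M"
    using periodic S by (auto simp: periodic_on_def invariant_subgroup_def)
  ultimately have "periodic_on f S (gcd (r * e * q) M)"
    by (rule periodic_on_gcd)
  then show ?thesis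
    using coprime_q_M by (metis coprime_commute gcd_mult_left_right_cancel)
qed

lemma shorter_period_from_image:
  assumes S: "invariant_subgroup S" and x: "x \<in> S" "x \<noteq> 0"
    and r: "0 < r" "(f ^^ r) x = x" and least: "\<And>k. 0 < k \<Longrightarrow> k < r \<Longrightarrow> (f ^^ k) x \<noteq> x"
    and e: "0 < e" "e + 1 \<le> card (pow_minus_id r ` S)" "periodic_on f (pow_minus_id r ` S) e"
  obtains L where "0 < L" "L + 2 \<le> card S" "periodic_on f S L"
proof
  show "0 < gcd (r * e) M"
    using M_pos by simp
  have "gcd (r * e) M + 3 \<le> r * e + r + e + 1"
    using r(1) e(1) gcd_le1_nat[of "r * e" M] by (simp del: gcd_le1_nat)
  also have "\<dots> = (r + 1) * (e + 1)"
    by simp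
  also have "\<dots> \<le> card {v \<in> S. (f ^^ r) v = v} * card (pow_minus_id r ` S)"
    using card_fixed_points_ge_least_period[OF S x r(2) least] e(2) by (rule mult_le_mono)
  also have "\<dots> = card S"
    using card_eq_card_fixed_mult_card_pow_minus_id[OF S] by simp
  finally show "gcd (r * e) M + 2 \<le> card S"
    by simp
  show "periodic_on f S (gcd (r * e) M)"
    using periodic_on_gcd_of_image_period[OF S e(3)] .
qed

lemma invariant_subgroup_short_period:
  assumes "invariant_subgroup S" "S \<noteq> {0}"
  shows "\<exists>e > 0. e + 1 \<le> card S \<and> periodic_on f S e"
  using assms
proof (induction "card S" arbitrary: S rule: less_induct)
  case less
  note S = less.prems(1)
  obtain x where x: "x \<in> S" "x \<noteq> 0"
    using less.prems by (auto simp: invariant_subgroup_def)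
  then have "(f ^^ M) x = x"
    using S periodic by (auto simp: invariant_subgroup_def periodic_on_def)
  then obtain r where r: "0 < r" "(f ^^ r) x = x" and least: "\<And>k. 0 < k \<Longrightarrow> k < r \<Longrightarrow> (f ^^ k) x \<noteq> x"
    using least_period_exists M_pos by metis
  let ?U = "pow_minus_id r ` S"
  have fixed: "r + 1 \<le> card {v \<in> S. (f ^^ r) v = v}"
    using card_fixed_points_ge_least_period[OF S x r(2) least] .
  show ?case
  proof (cases "?U = {0}")
    case True
    have "card {v \<in> S. (f ^^ r) v = v} \<le> card S"
      using finite_invariant_subgroup[OF S] by (intro card_mono) auto
    then show ?thesis
      using periodic_on_of_trivial_pow_minus_id_image[OF True] r(1) fixed by auto
  next
    case False
    have "card ?U \<noteq> 0"
      using finite_invariant_subgroup[OF S] x(1) by auto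
    then have "card ?U < card S"
      using card_eq_card_fixed_mult_card_pow_minus_id[OF S, of r] fixed r(1) by simp
    then obtain e where "0 < e" "e + 1 \<le> card ?U" "periodic_on f ?U e"
      using less.hyps invariant_subgroup_pow_minus_id_image[OF S] False by blast
    then obtain L where "0 < L" "L + 2 \<le> card S" "periodic_on f S L"
      using shorter_period_from_image[OF S x r least] by blast
    then show ?thesis
      by (intro exI[of _ L]) simp
  qed
qed

lemma nonzero_period_ge:
  assumes card_V: "card V = M + 1"
    and minimal: "\<And>k. 0 < k \<Longrightarrow> k < M \<Longrightarrow> \<not> periodic_on f V k"
    and x: "x \<in> V" "x \<noteq> 0" and k: "0 < k" "(f ^^ k) x = x"
  shows "M \<le> k"
proof (rule ccontr)
  assume "\<not> M \<le> k"
  obtain r where r: "0 < r" "(f ^^ r) x = x" and least: "\<And>j. 0 < j \<Longrightarrow> j < r \<Longrightarrow> (f ^^ j) x \<noteq> x"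
    using least_period_exists[OF k] by metis
  have "r < M"
    using least[OF k(1)] k(2) \<open>\<not> M \<le> k\<close> by (meson leI le_less_trans)
  let ?U = "pow_minus_id r ` V"
  have "?U \<noteq> {0}"
    using periodic_on_of_trivial_pow_minus_id_image minimal r(1) \<open>r < M\<close> by blast
  then obtain e where "0 < e" "e + 1 \<le> card ?U" "periodic_on f ?U e"
    using invariant_subgroup_short_period invariant_subgroup_pow_minus_id_image[OF invariant_subgroup_V]
    by blast
  then obtain L where "0 < L" "L + 2 \<le> card V" "periodic_on f V L"
    using shorter_period_from_image[OF invariant_subgroup_V x r least] by blast
  then show False
    using minimal card_V by simp
qed

end

section \<open>Row vectors times square matrices\<close>

text \<open>Vectors of \<open>F\<^sup>N\<close> are modelled as functions vanishing from \<open>N\<close> on: unlike \<open>'a vec\<close>,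
  they form a \<open>comm_ring_1\<close>, as the locale \<open>periodic_additive_map\<close> requires.\<close>

definition coord_vecs :: "nat \<Rightarrow> (nat \<Rightarrow> 'a::zero) set" where
  "coord_vecs N = {x. \<forall>i \<ge> N. x i = 0}"

definition row_mult :: "nat \<Rightarrow> 'a::semiring_0 mat \<Rightarrow> (nat \<Rightarrow> 'a) \<Rightarrow> nat \<Rightarrow> 'a" where
  "row_mult N T x = (\<lambda>c. if c < N then \<Sum>r<N. x r * T $$ (r, c) else 0)"

lemma coord_vecs_eq_image_lists:
  "coord_vecs N = (\<lambda>xs i. if i < N then xs ! i else 0) ` {xs. length xs = N}"
proof (intro equalityI subsetI)
  fix x :: "nat \<Rightarrow> 'a" assume "x \<in> coord_vecs N"
  then have "x = (\<lambda>i. if i < N then map x [0..<N] ! i else 0)"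
    by (auto simp: coord_vecs_def fun_eq_iff)
  then show "x \<in> (\<lambda>xs i. if i < N then xs ! i else 0) ` {xs. length xs = N}"
    by (intro image_eqI[where x = "map x [0..<N]"]) auto
qed (auto simp: coord_vecs_def)

lemma inj_on_lists_coord_vecs:
  "inj_on (\<lambda>xs i. if i < N then xs ! i else (0::'a::zero)) {xs. length xs = N}"
proof (rule inj_onI)
  fix xs ys :: "'a list"
  assume "xs \<in> {xs. length xs = N}" "ys \<in> {xs. length xs = N}"
    and eq: "(\<lambda>i. if i < N then xs ! i else 0) = (\<lambda>i. if i < N then ys ! i else 0)"
  moreover have "xs ! i = ys ! i" if "i < N" for i
    using fun_cong[OF eq, of i] that by simp
  ultimately show "xs = ys"
    by (auto intro: nth_equalityI)
qed

lemma card_coord_vecs: "card (coord_vecs N :: (nat \<Rightarrow> 'a::{finite,zero}) set) = card (UNIV :: 'a set) ^ N"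
  unfolding coord_vecs_eq_image_lists
  by (simp add: card_image[OF inj_on_lists_coord_vecs] card_lists_length_eq[of UNIV, simplified])

lemma finite_coord_vecs: "finite (coord_vecs N :: (nat \<Rightarrow> 'a::{finite,zero}) set)"
  unfolding coord_vecs_eq_image_lists by (simp add: finite_lists_length_eq[OF finite_UNIV, simplified])

lemma row_mult_in_coord_vecs: "row_mult N T x \<in> coord_vecs N"
  by (simp add: row_mult_def coord_vecs_def)

lemma additive_row_mult: "additive (row_mult N T)"
  by (rule additive.intro) (auto simp: row_mult_def fun_eq_iff sum.distrib distrib_right)

lemma row_mult_mult:
  assumes "A \<in> carrier_mat N N" "B \<in> carrier_mat N N"
  shows "row_mult N (A * B) x = row_mult N B (row_mult N A x)"
proof
  fix c
  show "row_mult N (A * B) x c = row_mult N B (row_mult N A x) c"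
  proof (cases "c < N")
    case True
    have "row_mult N (A * B) x c = (\<Sum>r<N. \<Sum>s<N. x r * A $$ (r, s) * B $$ (s, c))"
      using True assms
      by (simp add: row_mult_def scalar_prod_def atLeast0LessThan sum_distrib_left mult.assoc)
    also have "\<dots> = (\<Sum>s<N. (\<Sum>r<N. x r * A $$ (r, s)) * B $$ (s, c))"
      by (subst sum.swap) (simp add: sum_distrib_right)
    also have "\<dots> = row_mult N B (row_mult N A x) c"
      using True by (simp add: row_mult_def)
    finally show ?thesis .
  qed (simp add: row_mult_def)
qed

lemma row_mult_one: "(x :: nat \<Rightarrow> 'a::semiring_1) \<in> coord_vecs N \<Longrightarrow> row_mult N (1\<^sub>m N) x = x"
  by (auto simp: row_mult_def coord_vecs_def fun_eq_iff if_distrib[of "(*) _"] cong: if_cong)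

lemma funpow_row_mult:
  assumes "T \<in> carrier_mat N N" "x \<in> coord_vecs N"
  shows "(row_mult N T ^^ k) x = row_mult N (T ^\<^sub>m k) x"
  using assms by (induction k) (simp_all add: row_mult_one row_mult_mult)

lemma row_mult_unit_vec:
  assumes "(A :: 'a::semiring_1 mat) \<in> carrier_mat N N" "r < N" "c < N"
  shows "row_mult N A (\<lambda>i. if i = r then 1 else 0) c = A $$ (r, c)"
  using assms by (simp add: row_mult_def if_distrib[of "\<lambda>y. y * _"] cong: if_cong)

lemma mat_eq_if_row_mult_eq:
  assumes A: "(A :: 'a::semiring_1 mat) \<in> carrier_mat N N" and B: "B \<in> carrier_mat N N"
    and eq: "\<And>x. x \<in> coord_vecs N \<Longrightarrow> row_mult N A x = row_mult N B x"
  shows "A = B"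
proof (rule eq_matI)
  fix i j assume "i < dim_row B" "j < dim_col B"
  moreover have "(\<lambda>t. if t = i then 1 else 0) \<in> coord_vecs N"
    using \<open>i < dim_row B\<close> B by (auto simp: coord_vecs_def)
  ultimately show "A $$ (i, j) = B $$ (i, j)"
    using row_mult_unit_vec[OF A] row_mult_unit_vec[OF B] eq B by fastforce
qed (use A B in auto)

lemma periodic_on_row_mult_iff:
  assumes "T \<in> carrier_mat N N"
  shows "periodic_on (row_mult N T) (coord_vecs N) k \<longleftrightarrow> T ^\<^sub>m k = 1\<^sub>m N"
  using mat_eq_if_row_mult_eq[of "T ^\<^sub>m k" N "1\<^sub>m N"] assms
  by (auto simp: periodic_on_def funpow_row_mult row_mult_one)

section \<open>Orders of matrices and periods of vectors\<close>

lemma finite_carrier_mat: "finite (carrier_mat n m :: 'a::finite mat set)"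
proof -
  have "carrier_mat n m \<subseteq> (\<lambda>g. mat n m g) ` ({..<n} \<times> {..<m} \<rightarrow>\<^sub>E UNIV)"
  proof
    fix A assume "A \<in> carrier_mat n m"
    then have "A = mat n m (restrict (($$) A) ({..<n} \<times> {..<m}))"
      by (auto intro!: eq_matI)
    moreover have "restrict (($$) A) ({..<n} \<times> {..<m}) \<in> {..<n} \<times> {..<m} \<rightarrow>\<^sub>E UNIV"
      by simp
    ultimately show "A \<in> (\<lambda>g. mat n m g) ` ({..<n} \<times> {..<m} \<rightarrow>\<^sub>E UNIV)"
      by blast
  qed
  then show ?thesis
    by (rule finite_subset) (simp add: finite_PiE)
qed

lemma pow_mat_Suc_left: "T \<in> carrier_mat n n \<Longrightarrow> T ^\<^sub>m Suc k = T * T ^\<^sub>m k"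
proof (induction k)
  case (Suc k)
  then have "T ^\<^sub>m Suc (Suc k) = (T * T ^\<^sub>m k) * T"
    by simp
  also have "\<dots> = T * T ^\<^sub>m Suc k"
    using Suc.prems by (simp add: assoc_mult_mat[of T n n _ n])
  finally show ?case .
qed simp

lemma pow_mat_eq_one_of_eq:
  assumes T: "T \<in> carrier_mat n n" and B: "B \<in> carrier_mat n n" "B * T = 1\<^sub>m n"
  shows "T ^\<^sub>m i = T ^\<^sub>m (i + d) \<Longrightarrow> T ^\<^sub>m d = 1\<^sub>m n"
proof (induction i)
  case (Suc i)
  have cancel: "B * (T * X) = X" if "X \<in> carrier_mat n n" for X
  proof -
    have "B * (T * X) = (B * T) * X"
      using assoc_mult_mat[OF B(1) T that] by simp
    then show ?thesis
      using B that by simp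
  qed
  have "T * T ^\<^sub>m i = T * T ^\<^sub>m (i + d)"
    using Suc.prems unfolding pow_mat_Suc_left[OF T, symmetric] by simp
  then have "B * (T * T ^\<^sub>m i) = B * (T * T ^\<^sub>m (i + d))"
    by simp
  then have "T ^\<^sub>m i = T ^\<^sub>m (i + d)"
    using T by (simp only: cancel pow_carrier_mat)
  then show ?case
    by (rule Suc.IH)
qed (use T in simp)
lemma invertible_mat_pow_eq_one:
  fixes T :: "'a::{finite,field} mat"
  assumes T: "T \<in> carrier_mat n n" and "invertible_mat T"
  obtains d where "0 < d" "T ^\<^sub>m d = 1\<^sub>m n"
proof -
  obtain B where TB: "T * B = 1\<^sub>m n" and BT: "B * T = 1\<^sub>m (dim_row B)"
    using assms by (auto simp: invertible_mat_def inverts_mat_def)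
  have "dim_col B = n" "dim_row B = n"
    using arg_cong[OF TB, of dim_col] arg_cong[OF BT, of dim_col] T by auto
  then have B: "B \<in> carrier_mat n n" "B * T = 1\<^sub>m n"
    using BT by auto
  have "finite (range (\<lambda>k. T ^\<^sub>m k))"
    using T by (intro finite_subset[OF _ finite_carrier_mat]) auto
  then have "\<not> inj (\<lambda>k. T ^\<^sub>m k)"
    using finite_imageD infinite_UNIV_nat by blast
  then obtain i j where "i \<noteq> j" "T ^\<^sub>m i = T ^\<^sub>m j"
    unfolding inj_def by blast
  then obtain i j where "i < j" "T ^\<^sub>m i = T ^\<^sub>m j"
    by (metis linorder_neqE_nat)
  then have "T ^\<^sub>m (j - i) = 1\<^sub>m n"
    using pow_mat_eq_one_of_eq[OF T B, of i "j - i"] by simp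
  then show ?thesis
    using \<open>i < j\<close> by (intro that[of "j - i"]) simp_all
qed

lemma invertible_mat_order_iff:
  fixes T :: "'a::{finite,field} mat"
  assumes T: "T \<in> carrier_mat n n" and M: "0 < M"
  shows "invertible_mat T \<and> mat_order T = M \<longleftrightarrow>
    T ^\<^sub>m M = 1\<^sub>m n \<and> (\<forall>k. 0 < k \<and> k < M \<longrightarrow> T ^\<^sub>m k \<noteq> 1\<^sub>m n)"
proof
  assume H: "invertible_mat T \<and> mat_order T = M"
  then obtain d where "0 < d" "T ^\<^sub>m d = 1\<^sub>m n"
    using invertible_mat_pow_eq_one[OF T] by blast
  then have ex: "\<exists>d. 0 < d \<and> T ^\<^sub>m d = 1\<^sub>m (dim_row T)"
    using T by auto
  have "0 < mat_order T \<and> T ^\<^sub>m mat_order T = 1\<^sub>m (dim_row T)"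
    unfolding mat_order_def by (rule LeastI_ex[OF ex])
  moreover have "\<not> (0 < k \<and> T ^\<^sub>m k = 1\<^sub>m (dim_row T))" if "k < mat_order T" for k
    using not_less_Least that unfolding mat_order_def .
  ultimately show "T ^\<^sub>m M = 1\<^sub>m n \<and> (\<forall>k. 0 < k \<and> k < M \<longrightarrow> T ^\<^sub>m k \<noteq> 1\<^sub>m n)"
    using H T by auto
next
  assume H: "T ^\<^sub>m M = 1\<^sub>m n \<and> (\<forall>k. 0 < k \<and> k < M \<longrightarrow> T ^\<^sub>m k \<noteq> 1\<^sub>m n)"
  have M_Suc: "M = Suc (M - 1)"
    using M by simp
  have "T * T ^\<^sub>m (M - 1) = 1\<^sub>m n"
    using H pow_mat_Suc_left[OF T, of "M - 1"] M_Suc by simp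
  moreover have "T ^\<^sub>m (M - 1) * T = 1\<^sub>m n"
    using H M_Suc pow_mat.simps(2)[of T "M - 1"] by simp
  ultimately have "invertible_mat T"
    using T unfolding invertible_mat_def inverts_mat_def
    by (intro conjI exI[of _ "T ^\<^sub>m (M - 1)"]) (auto simp: square_mat.simps)
  moreover have "mat_order T = M"
    unfolding mat_order_def
  proof (rule Least_equality)
    show "0 < M \<and> T ^\<^sub>m M = 1\<^sub>m (dim_row T)"
      using H T M by simp
    show "M \<le> k" if "0 < k \<and> T ^\<^sub>m k = 1\<^sub>m (dim_row T)" for k
      using H T that leI by auto
  qed
  ultimately show "invertible_mat T \<and> mat_order T = M" ..
qed

lemma orbit_shift_invariant_iff: "(\<forall>j. (f ^^ (j + r)) x = (f ^^ j) x) \<longleftrightarrow> (f ^^ r) x = x"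
  by (metis add_0 comp_apply funpow_0 funpow_add)

lemma periodic_with_period_orbit_iff:
  "periodic_with_period (\<lambda>k. (f ^^ k) x) r \<longleftrightarrow>
     0 < r \<and> (f ^^ r) x = x \<and> (\<forall>k. 0 < k \<and> k < r \<longrightarrow> (f ^^ k) x \<noteq> x)"
  unfolding periodic_with_period_def orbit_shift_invariant_iff ..

lemma of_nat_card_UNIV: "of_nat (card (UNIV :: 'a::{finite,ring_1} set)) = (0 :: 'a)"
  by (simp add: of_nat_eq_0_iff_char_dvd CHAR_dvd_CARD)

lemma card_UNIV_field_ge_2: "2 \<le> card (UNIV :: 'a::{finite,field} set)"
proof -
  have "card {0 :: 'a, 1} \<le> card (UNIV :: 'a set)"
    by (rule card_mono) auto
  then show ?thesis
    by simp
qed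

theorem orbits_full_period_iff_mat_order:
  fixes T :: "'a::{finite,field} mat"
  assumes T: "T \<in> carrier_mat N N" and N: "0 < N"
  defines "M \<equiv> card (UNIV :: 'a set) ^ N - 1"
  shows "(\<forall>x \<in> coord_vecs N - {0}. periodic_with_period (\<lambda>k. (row_mult N T ^^ k) x) M)
    \<longleftrightarrow> invertible_mat T \<and> mat_order T = M"
proof -
  let ?f = "row_mult N T" and ?V = "coord_vecs N :: (nat \<Rightarrow> 'a) set"
  have "card (UNIV :: 'a set) \<le> card (UNIV :: 'a set) ^ N"
    using N card_UNIV_field_ge_2[where 'a = 'a] by (simp add: self_le_power)
  then have M: "0 < M" "card ?V = M + 1"
    using card_UNIV_field_ge_2[where 'a = 'a] by (auto simp: M_def card_coord_vecs)
  have unit_vec: "(\<lambda>i. if i = 0 then 1 else 0) \<in> ?V - {0}"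
    using N by (auto simp: coord_vecs_def fun_eq_iff)
  have "(\<forall>x \<in> ?V - {0}. periodic_with_period (\<lambda>k. (?f ^^ k) x) M)
      \<longleftrightarrow> periodic_on ?f ?V M \<and> (\<forall>k. 0 < k \<and> k < M \<longrightarrow> \<not> periodic_on ?f ?V k)"
  proof
    assume full: "\<forall>x \<in> ?V - {0}. periodic_with_period (\<lambda>k. (?f ^^ k) x) M"
    have "(?f ^^ M) 0 = 0"
      using additive.zero[OF additive_funpow[OF additive_row_mult]] .
    then have "periodic_on ?f ?V M"
      using full by (auto simp: periodic_on_def periodic_with_period_orbit_iff)
    moreover have "\<not> periodic_on ?f ?V k" if "0 < k" "k < M" for k
      using full unit_vec that by (fastforce simp: periodic_on_def periodic_with_period_orbit_iff)
    ultimately show "periodic_on ?f ?V M \<and> (\<forall>k. 0 < k \<and> k < M \<longrightarrow> \<not> periodic_on ?f ?V k)"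
      by blast
  next
    assume H: "periodic_on ?f ?V M \<and> (\<forall>k. 0 < k \<and> k < M \<longrightarrow> \<not> periodic_on ?f ?V k)"
    interpret periodic_additive_map ?V ?f "card (UNIV :: 'a set)" M
    proof (rule periodic_additive_map.intro)
      have "coprime (card (UNIV :: 'a set) ^ N) M"
        unfolding M_def by (rule coprime_diff_one_right_nat) (simp add: finite_UNIV_card_ge_0)
      then show "coprime (card (UNIV :: 'a set)) M"
        using N by (simp add: coprime_power_left_iff)
      show "finite ?V"
        by (rule finite_coord_vecs)
      show "?f x \<in> ?V" for x
        by (rule row_mult_in_coord_vecs)
      show "of_nat (card (UNIV :: 'a set)) * x = 0" for x :: "nat \<Rightarrow> 'a"
        by (simp add: of_nat_fun of_nat_card_UNIV fun_eq_iff)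
    qed (use H M(1) in \<open>simp_all add: additive_row_mult coord_vecs_def\<close>)
    show "\<forall>x \<in> ?V - {0}. periodic_with_period (\<lambda>k. (?f ^^ k) x) M"
    proof
      fix x assume x: "x \<in> ?V - {0}"
      have minimal: "\<not> periodic_on ?f ?V k" if "0 < k" "k < M" for k
        using H that by blast
      have "M \<le> k" if "0 < k" "(?f ^^ k) x = x" for k
        using nonzero_period_ge[OF M(2) minimal _ _ that] x by simp
      moreover have "(?f ^^ M) x = x"
        using H x unfolding periodic_on_def by blast
      ultimately show "periodic_with_period (\<lambda>k. (?f ^^ k) x) M"
        using M(1) unfolding periodic_with_period_orbit_iff by (meson leD)
    qed
  qed
  also have "\<dots> \<longleftrightarrow> invertible_mat T \<and> mat_order T = M"
    using invertible_mat_order_iff[OF T M(1)] by (simp add: periodic_on_row_mult_iff[OF T])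
  finally show ?thesis .
qed

section \<open>\<sigma>-LFSRs as block companion matrices\<close>

lemma block_index_less:
  assumes "l < m" "j < n"
  shows "j * m + l < m * (n :: nat)"
proof -
  have "j * m + l < (j + 1) * m"
    using assms(1) by simp
  also have "\<dots> \<le> n * m"
    using assms(2) by (intro mult_le_mono1) simp
  finally show ?thesis
    by (simp add: mult.commute)
qed

lemma sum_blocks: "(\<Sum>t < m * n. g t) = (\<Sum>j < n. \<Sum>l < m. g (j * m + l :: nat))"
proof -
  have "(\<Sum>t < m * n. g t) = (\<Sum>j < n. sum g {j * m..<j * m + m})"
    using sum.nat_group[of g m n] by (simp add: mult.commute)
  also have "\<dots> = (\<Sum>j < n. \<Sum>l < m. g (j * m + l))"
  proof (rule sum.cong[OF refl])
    fix j
    have "sum g {0 + j * m..<m + j * m} = (\<Sum>l = 0..<m. g (l + j * m))"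
      by (rule sum.shift_bounds_nat_ivl)
    then show "sum g {j * m..<j * m + m} = (\<Sum>l < m. g (j * m + l))"
      by (simp add: atLeast0LessThan add.commute)
  qed
  finally show ?thesis .
qed

lemma block_companion_entry:
  assumes "l < m" "j < n" "k < m" "i < n"
  shows "block_companion m n C $$ (j * m + l, i * m + k) =
    (if i = n - 1 then C ! j $$ (l, k) else if j = i + 1 \<and> l = k then 1 else 0)"
  using assms block_index_less[of l m j n] block_index_less[of k m i n]
  by (simp add: block_companion_def)

lemma row_mult_block_companion:
  assumes k: "k < m" and i: "i < n"
  shows "row_mult (m * n) (block_companion m n C) x (i * m + k) =
    (if i + 1 < n then x ((i + 1) * m + k) else \<Sum>j < n. \<Sum>l < m. x (j * m + l) * C ! j $$ (l, k))"
proof -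
  have "row_mult (m * n) (block_companion m n C) x (i * m + k)
      = (\<Sum>j < n. \<Sum>l < m. x (j * m + l) * block_companion m n C $$ (j * m + l, i * m + k))"
    using block_index_less[OF k i] by (simp add: row_mult_def sum_blocks)
  also have "\<dots> = (\<Sum>j < n. \<Sum>l < m. x (j * m + l) *
      (if i = n - 1 then C ! j $$ (l, k) else if j = i + 1 \<and> l = k then 1 else 0))"
    using k i by (intro sum.cong refl) (simp add: block_companion_entry)
  also have "\<dots> = (if i + 1 < n then x ((i + 1) * m + k)
      else \<Sum>j < n. \<Sum>l < m. x (j * m + l) * C ! j $$ (l, k))"
  proof (cases "i + 1 < n")
    case True
    then have "i \<noteq> n - 1"
      by simp
    have inner: "(\<Sum>l < m. x (j * m + l) *
        (if i = n - 1 then C ! j $$ (l, k) else if j = i + 1 \<and> l = k then 1 else 0))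
      = (if j = i + 1 then x ((i + 1) * m + k) else 0)" for j
      using \<open>i \<noteq> n - 1\<close> k by (cases "j = i + 1") (simp_all add: if_distrib[of "(*) _"] sum.delta' cong: if_cong)
    show ?thesis
      using True sum.cong[OF refl inner, where A = "{..<n}"] by simp
  next
    case False
    then have "i = n - 1"
      using i by simp
    then show ?thesis
      using False by simp
  qed
  finally show ?thesis .
qed

definition window_coords :: "nat \<Rightarrow> nat \<Rightarrow> (nat \<Rightarrow> 'a::zero vec) \<Rightarrow> nat \<Rightarrow> 'a" where
  "window_coords m n w = (\<lambda>t. if t < m * n then w (t div m) $ (t mod m) else 0)"

lemma window_coords_block: "l < m \<Longrightarrow> j < n \<Longrightarrow> window_coords m n w (j * m + l) = w j $ l"
  using block_index_less[of l m j n] by (simp add: window_coords_def)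

lemma window_coords_lfsr_step:
  assumes "0 < m"
  shows "window_coords m n (lfsr_step m n C w) = row_mult (m * n) (block_companion m n C) (window_coords m n w)"
proof
  fix t
  show "window_coords m n (lfsr_step m n C w) t = row_mult (m * n) (block_companion m n C) (window_coords m n w) t"
  proof (cases "t < m * n")
    case True
    define i k where "i = t div m" and "k = t mod m"
    have ik: "i < n" "k < m" "t = i * m + k"
      using True assms by (auto simp: i_def k_def div_less_iff_less_mult mult.commute)
    show ?thesis
      using ik window_coords_block[of k m "i + 1" n w]
      by (simp add: row_mult_block_companion window_coords_block lfsr_step_def)
  qed (simp add: window_coords_def row_mult_def)
qed

lemma window_coords_funpow_lfsr_step:
  assumes "0 < m"
  shows "window_coords m n ((lfsr_step m n C ^^ k) w) =
    (row_mult (m * n) (block_companion m n C) ^^ k) (window_coords m n w)"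
  by (induction k) (simp_all add: window_coords_lfsr_step[OF assms])

lemma funpow_lfsr_step_window: "i < n \<Longrightarrow> ((lfsr_step m n C ^^ i) w) 0 = w i"
proof (induction i arbitrary: w)
  case (Suc i)
  have "((lfsr_step m n C ^^ Suc i) w) 0 = ((lfsr_step m n C ^^ i) (lfsr_step m n C w)) 0"
    by (simp only: funpow_Suc_right comp_apply)
  also have "\<dots> = lfsr_step m n C w i"
    using Suc by simp
  also have "\<dots> = w (Suc i)"
    using Suc.prems by (simp add: lfsr_step_def)
  finally show ?case .
qed simp

lemma lfsr_seq_eq_window: "i < n \<Longrightarrow> lfsr_seq m n C s0 (i + k) = ((lfsr_step m n C ^^ k) s0) i"
  by (simp add: lfsr_seq_def funpow_add funpow_lfsr_step_window)

lemma lfsr_seq_shift_invariant_iff: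
  assumes "0 < n"
  shows "(\<forall>j. lfsr_seq m n C s0 (j + r) = lfsr_seq m n C s0 j) \<longleftrightarrow>
    (\<forall>k. \<forall>i < n. ((lfsr_step m n C ^^ (k + r)) s0) i = ((lfsr_step m n C ^^ k) s0) i)"
  using lfsr_seq_eq_window[of 0 n m C s0] lfsr_seq_eq_window[of _ n m C s0] assms
  by (metis add.assoc add.left_neutral)

lemma window_coords_eq_iff:
  assumes "\<forall>i < n. w i \<in> carrier_vec m" "\<forall>i < n. w' i \<in> carrier_vec m"
  shows "window_coords m n w = window_coords m n w' \<longleftrightarrow> (\<forall>i < n. w i = w' i)"
proof
  assume eq: "window_coords m n w = window_coords m n w'"
  show "\<forall>i < n. w i = w' i"
  proof (intro allI impI)
    fix i assume i: "i < n"
    have "w i $ l = w' i $ l" if "l < m" for l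
      using fun_cong[OF eq, of "i * m + l"] window_coords_block[OF that i] by metis
    then show "w i = w' i"
      using assms i by (intro eq_vecI) auto
  qed
next
  assume "\<forall>i < n. w i = w' i"
  moreover have "t div m < n" if "t < m * n" for t
    using that by (simp add: less_mult_imp_div_less mult.commute)
  ultimately show "window_coords m n w = window_coords m n w'"
    by (auto simp: window_coords_def)
qed

lemma lfsr_step_carrier: "\<forall>i < n. w i \<in> carrier_vec m \<Longrightarrow> \<forall>i < n. lfsr_step m n C w i \<in> carrier_vec m"
  by (simp add: lfsr_step_def)

lemma funpow_lfsr_step_carrier:
  "\<forall>i < n. w i \<in> carrier_vec m \<Longrightarrow> \<forall>i < n. (lfsr_step m n C ^^ k) w i \<in> carrier_vec m"
  by (induction k) (simp_all add: lfsr_step_carrier)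

lemma periodic_with_period_cong:
  "(\<And>r. (\<forall>j. s (j + r) = s j) \<longleftrightarrow> (\<forall>j. t (j + r) = t j)) \<Longrightarrow>
    periodic_with_period s r \<longleftrightarrow> periodic_with_period t r"
  by (simp add: periodic_with_period_def)

lemma periodic_lfsr_seq_iff:
  assumes m: "0 < m" and n: "0 < n" and s0: "\<forall>i < n. s0 i \<in> carrier_vec m"
  shows "periodic_with_period (lfsr_seq m n C s0) r \<longleftrightarrow>
    periodic_with_period (\<lambda>k. (row_mult (m * n) (block_companion m n C) ^^ k) (window_coords m n s0)) r"
proof (rule periodic_with_period_cong)
  fix r
  let ?step = "lfsr_step m n C" and ?f = "row_mult (m * n) (block_companion m n C)"
  have "(\<forall>i < n. (?step ^^ (k + r)) s0 i = (?step ^^ k) s0 i) \<longleftrightarrow>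
      (?f ^^ (k + r)) (window_coords m n s0) = (?f ^^ k) (window_coords m n s0)" for k
    using window_coords_eq_iff[OF funpow_lfsr_step_carrier[OF s0] funpow_lfsr_step_carrier[OF s0]]
    by (simp add: window_coords_funpow_lfsr_step[OF m])
  then show "(\<forall>j. lfsr_seq m n C s0 (j + r) = lfsr_seq m n C s0 j) \<longleftrightarrow>
      (\<forall>j. (?f ^^ (j + r)) (window_coords m n s0) = (?f ^^ j) (window_coords m n s0))"
    by (simp add: lfsr_seq_shift_invariant_iff[OF n])
qed

lemma window_coords_eq_0_iff:
  assumes "\<forall>i < n. w i \<in> carrier_vec m"
  shows "window_coords m n w = 0 \<longleftrightarrow> (\<forall>i < n. w i = 0\<^sub>v m)"
proof -
  have "window_coords m n (\<lambda>_. 0\<^sub>v m) = (0 :: nat \<Rightarrow> 'a)"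
    by (cases "m = 0") (auto simp: window_coords_def fun_eq_iff)
  then show ?thesis
    using window_coords_eq_iff[of n w m "\<lambda>_. 0\<^sub>v m"] assms by simp
qed

definition window_of_coords :: "nat \<Rightarrow> (nat \<Rightarrow> 'a) \<Rightarrow> nat \<Rightarrow> 'a vec" where
  "window_of_coords m x = (\<lambda>i. vec m (\<lambda>l. x (i * m + l)))"

lemma window_coords_window_of_coords:
  assumes "0 < m" "x \<in> coord_vecs (m * n)"
  shows "window_coords m n (window_of_coords m x) = x"
  using assms by (auto simp: window_coords_def window_of_coords_def coord_vecs_def fun_eq_iff)

lemma primitive_lfsr_iff_orbits:
  fixes C :: "'a::{finite,field} mat list"
  assumes m: "0 < m" and n: "0 < n"
  shows "primitive_lfsr m n C \<longleftrightarrow>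
    (\<forall>x \<in> coord_vecs (m * n) - {0}. periodic_with_period
       (\<lambda>k. (row_mult (m * n) (block_companion m n C) ^^ k) x) (card (UNIV :: 'a set) ^ (m * n) - 1))"
  (is "_ \<longleftrightarrow> (\<forall>x \<in> _. ?full x)")
proof
  assume prim: "primitive_lfsr m n C"
  show "\<forall>x \<in> coord_vecs (m * n) - {0}. ?full x"
  proof
    fix x :: "nat \<Rightarrow> 'a" assume x: "x \<in> coord_vecs (m * n) - {0}"
    have carrier: "\<forall>i < n. window_of_coords m x i \<in> carrier_vec m"
      by (simp add: window_of_coords_def)
    have coords: "window_coords m n (window_of_coords m x) = x"
      using window_coords_window_of_coords[OF m] x by blast
    then have "\<exists>i < n. window_of_coords m x i \<noteq> 0\<^sub>v m"
      using window_coords_eq_0_iff[OF carrier] x by auto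
    then have "periodic_with_period (lfsr_seq m n C (window_of_coords m x))
        (card (UNIV :: 'a set) ^ (m * n) - 1)"
      using prim carrier unfolding primitive_lfsr_def by blast
    then show "?full x"
      using periodic_lfsr_seq_iff[OF m n carrier] coords by simp
  qed
next
  assume full: "\<forall>x \<in> coord_vecs (m * n) - {0}. ?full x"
  show "primitive_lfsr m n C"
    unfolding primitive_lfsr_def
  proof (intro allI impI)
    fix s0 :: "nat \<Rightarrow> 'a vec" assume s0: "(\<forall>i < n. s0 i \<in> carrier_vec m) \<and> (\<exists>i < n. s0 i \<noteq> 0\<^sub>v m)"
    then have "window_coords m n s0 \<in> coord_vecs (m * n) - {0}"
      using window_coords_eq_0_iff[of n s0 m] by (auto simp: window_coords_def coord_vecs_def)
    then show "periodic_with_period (lfsr_seq m n C s0) (card (UNIV :: 'a set) ^ (m * n) - 1)"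
      using full periodic_lfsr_seq_iff[OF m n] s0 by blast
  qed
qed

lemma block_companion_last_block_column:
  assumes "l < m" "j < n" "k < m"
  shows "block_companion m n C $$ (j * m + l, (n - 1) * m + k) = C ! j $$ (l, k)"
  using assms block_companion_entry[of l m j n k "n - 1" C] by simp

lemma block_companion_carrier: "block_companion m n C \<in> carrier_mat (m * n) (m * n)"
  by (simp add: block_companion_def)

lemma inj_on_block_companion: "inj_on (block_companion m n) (coeff_tuples m n)"
proof (rule inj_onI)
  fix C D assume C: "C \<in> coeff_tuples m n" and D: "D \<in> coeff_tuples m n"
    and eq: "block_companion m n C = block_companion m n D"
  show "C = D"
  proof (rule nth_equalityI)
    show "length C = length D"
      using C D by (simp add: coeff_tuples_def)
    fix j assume "j < length C"
    then have j: "j < n" "C ! j \<in> carrier_mat m m" "D ! j \<in> carrier_mat m m"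
      using C D by (auto simp: coeff_tuples_def)
    show "C ! j = D ! j"
      using j eq block_companion_last_block_column[of _ m j n _ C]
        block_companion_last_block_column[of _ m j n _ D]
      by (intro eq_matI) auto
  qed
qed

theorem theorem5p2:
  fixes m n :: nat
  assumes "0 < m" and "0 < n"
  shows "real (card {C \<in> coeff_tuples m n. primitive_lfsr m n (C :: ('a::{finite,field}) mat list)})
           = Upsilon m n (card (UNIV :: 'a set))
     \<longleftrightarrow> real (card {T \<in> BCM m n TYPE('a). invertible_mat T \<and>
                     mat_order T = card (UNIV :: 'a set) ^ (m * n) - 1})
           = Upsilon m n (card (UNIV :: 'a set))"
proof -
  have "primitive_lfsr m n C \<longleftrightarrow> invertible_mat (block_companion m n C)
      \<and> mat_order (block_companion m n C) = card (UNIV :: 'a set) ^ (m * n) - 1"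
    for C :: "'a mat list"
    unfolding primitive_lfsr_iff_orbits[OF assms]
    by (rule orbits_full_period_iff_mat_order[OF block_companion_carrier]) (use assms in simp)
  then have "{T \<in> BCM m n TYPE('a). invertible_mat T \<and> mat_order T = card (UNIV :: 'a set) ^ (m * n) - 1}
      = block_companion m n ` {C \<in> coeff_tuples m n. primitive_lfsr m n C}"
    by (auto simp: BCM_def)
  moreover have "inj_on (block_companion m n) {C \<in> coeff_tuples m n. primitive_lfsr m n (C :: 'a mat list)}"
    using inj_on_block_companion by (rule inj_on_subset) auto
  ultimately show ?thesis
    by (simp only: card_image)
qed

end
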